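(* Let $m\ge 2$, $k=2$ (the Bradley--Terry paired comparison model) and $\pi\in\mathbb{R}^m_{>0}$. A Bradley--Terry design $\xi^*=(w^*_{uv})_{u<v}$ is locally $D$-optimal if and only if (i) $w^*_{uv}\ge0$ for all $1\le u<v\le m$, (ii) $\Gamma_{uv}(\xi^* )\le\overline{\Gamma}_{uv}$ for all $u< v$, and (iii) $(\Gamma_{uv}(\xi^* )-\overline{\Gamma}_{uv})\,w^*_{uv}=0$ for all $u<v$, where $\overline{\Gamma}_{uv}=(m-1)/\lambda_{uv}$.
   Context: Bradley--Terry model: alternatives $[m]$ with parameters $\pi_i>0$; choice sets are all pairs $\{u,v\}$; in pair $\{u,v\}$, $u$ is chosen with probability $\pi_u/(\pi_u+\pi_v)$. A design is $\xi=(w_{uv})_{u<v}$ with $w_{uv}\ge0$ and $\sum w_{uv}=1$. Let $\lambda_{uv}=\pi_u\pi_v/(\pi_u+\pi_v)^2$. The information matrix $M(\xi)$ is the $m\times m$ Laplacian with $M_{uv}=-\lambda_{uv}w_{uv}$ for $u\neq v$ and zero row sums; $M^{(m)}(\xi)$ deletes the $m$-th row and column; $\xi^*$ is locally $D$-optimal if it maximizes $\log\det M^{(m)}(\xi)$ over all designs. $\Gamma(\xi)$ is the Farris transform of $\Sigma=M^{(m)}(\xi)^{-1}$: $\Gamma_{uv}=\Sigma_{uu}+\Sigma_{vv}-2\Sigma_{uv}$ for $u,v<m$, $\Gamma_{um}=\Gamma_{mu}=\Sigma_{uu}$, $\Gamma_{mm}=0$. *)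

theory Defs
  imports "Jordan_Normal_Form.Determinant"
begin

(* Alternatives are indexed 0,...,m-1; the "m-th" alternative of the paper is index m-1.
   A design is given by weights w u v for 0 <= u < v < m (values off this range are ignored). *)

definition bt_lambda :: "(nat \<Rightarrow> real) \<Rightarrow> nat \<Rightarrow> nat \<Rightarrow> real" where
  "bt_lambda \<pi> u v = \<pi> u * \<pi> v / (\<pi> u + \<pi> v)^2"

definition pairs :: "nat \<Rightarrow> (nat \<times> nat) set" where
  "pairs m = {(u, v). u < v \<and> v < m}"

definition is_design :: "nat \<Rightarrow> (nat \<Rightarrow> nat \<Rightarrow> real) \<Rightarrow> bool" where
  "is_design m w \<longleftrightarrow> (\<forall>(u, v) \<in> pairs m. 0 \<le> w u v) \<and> (\<Sum>(u, v)\<in>pairs m. w u v) = 1"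

definition sym_w :: "(nat \<Rightarrow> nat \<Rightarrow> real) \<Rightarrow> nat \<Rightarrow> nat \<Rightarrow> real" where
  "sym_w w u v = w (min u v) (max u v)"

definition info_mat :: "nat \<Rightarrow> (nat \<Rightarrow> real) \<Rightarrow> (nat \<Rightarrow> nat \<Rightarrow> real) \<Rightarrow> real mat" where
  "info_mat m \<pi> w = mat m m (\<lambda>(u, v).
      if u = v then (\<Sum>t\<in>{0..<m} - {u}. bt_lambda \<pi> u t * sym_w w u t)
      else - bt_lambda \<pi> u v * sym_w w u v)"

definition info_mat_red :: "nat \<Rightarrow> (nat \<Rightarrow> real) \<Rightarrow> (nat \<Rightarrow> nat \<Rightarrow> real) \<Rightarrow> real mat" where
  "info_mat_red m \<pi> w = mat (m - 1) (m - 1) (\<lambda>(u, v). info_mat m \<pi> w $$ (u, v))"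

definition locally_D_optimal :: "nat \<Rightarrow> (nat \<Rightarrow> real) \<Rightarrow> (nat \<Rightarrow> nat \<Rightarrow> real) \<Rightarrow> bool" where
  "locally_D_optimal m \<pi> w \<longleftrightarrow> is_design m w \<and> 0 < det (info_mat_red m \<pi> w) \<and>
     (\<forall>w'. is_design m w' \<longrightarrow> 0 < det (info_mat_red m \<pi> w') \<longrightarrow>
        ln (det (info_mat_red m \<pi> w')) \<le> ln (det (info_mat_red m \<pi> w)))"

definition mat_inv :: "nat \<Rightarrow> real mat \<Rightarrow> real mat" where
  "mat_inv n A = (THE S. S \<in> carrier_mat n n \<and> A * S = 1\<^sub>m n \<and> S * A = 1\<^sub>m n)"

definition Gamma :: "nat \<Rightarrow> (nat \<Rightarrow> real) \<Rightarrow> (nat \<Rightarrow> nat \<Rightarrow> real) \<Rightarrow> nat \<Rightarrow> nat \<Rightarrow> real" where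
  "Gamma m \<pi> w u v = (let S = mat_inv (m - 1) (info_mat_red m \<pi> w) in
     if u = m - 1 \<and> v = m - 1 then 0
     else if v = m - 1 then S $$ (u, u)
     else if u = m - 1 then S $$ (v, v)
     else S $$ (u, u) + S $$ (v, v) - 2 * S $$ (u, v))"

definition Gamma_bar :: "nat \<Rightarrow> (nat \<Rightarrow> real) \<Rightarrow> nat \<Rightarrow> nat \<Rightarrow> real" where
  "Gamma_bar m \<pi> u v = (real m - 1) / bt_lambda \<pi> u v"

end

theory Submission
  imports
    Defs
    "Jordan_Normal_Form.Schur_Decomposition"
    "Jordan_Normal_Form.Jordan_Normal_Form_Uniqueness"
begin

text \<open>
  Write \<open>L\<close> for the reduced information matrix of \<open>w\<close>, \<open>\<Sigma> = L\<inverse>\<close>, and \<open>M'\<close> for that of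
  another design \<open>w'\<close>. Both are sums of outer products \<open>w\<^sub>u\<^sub>v \<lambda>\<^sub>u\<^sub>v d\<^sub>u\<^sub>v d\<^sub>u\<^sub>v\<^sup>T\<close> of
  incidence vectors, so \<open>L\<close> is positive definite and \<open>M'\<close> positive semidefinite. Hence
  \<open>\<Sigma> M'\<close> has real nonnegative eigenvalues \<open>r\<^sub>i\<close>, with \<open>det (a L + b M') = det L \<Prod> (a + b r\<^sub>i)\<close>
  and \<open>\<Sum> r\<^sub>i = tr (\<Sigma> M') = \<Sum> w'\<^sub>u\<^sub>v \<lambda>\<^sub>u\<^sub>v \<Gamma>\<^sub>u\<^sub>v\<close>, because \<open>\<Gamma>\<^sub>u\<^sub>v = d\<^sub>u\<^sub>v\<^sup>T \<Sigma> d\<^sub>u\<^sub>v\<close>.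

  If \<open>\<lambda>\<^sub>u\<^sub>v \<Gamma>\<^sub>u\<^sub>v \<le> m - 1\<close> for all pairs, the trace is at most \<open>m - 1\<close> and the
  arithmetic-geometric mean inequality gives \<open>det M' \<le> det L\<close>. Conversely, moving from \<open>w\<close>
  towards \<open>w'\<close> multiplies \<open>det L\<close> by at least \<open>(1 - t)^(m - 2) (1 - t + t tr (\<Sigma> M'))\<close>,
  which exceeds \<open>1\<close> for small \<open>t > 0\<close> unless \<open>tr (\<Sigma> M') \<le> m - 1\<close>; for \<open>w'\<close> concentrated
  on \<open>{u, v}\<close> this trace is \<open>\<lambda>\<^sub>u\<^sub>v \<Gamma>\<^sub>u\<^sub>v\<close>. Complementary slackness follows from
  \<open>\<Sum> w\<^sub>u\<^sub>v \<lambda>\<^sub>u\<^sub>v \<Gamma>\<^sub>u\<^sub>v = tr (\<Sigma> L) = m - 1 = \<Sum> w\<^sub>u\<^sub>v (m - 1)\<close>.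
\<close>

section \<open>Elementary inequalities\<close>

lemma prod_list_le_exp_sum:
  fixes rs :: "real list"
  assumes "\<forall>r \<in> set rs. 0 \<le> r"
  shows "prod_list rs \<le> exp (sum_list rs - length rs)"
  using assms
proof (induction rs)
  case (Cons r rs)
  have "r \<le> exp (r - 1)" using exp_ge_add_one_self[of "r - 1"] by simp
  moreover have "0 \<le> prod_list rs" using Cons.prems by (simp add: prod_list_nonneg)
  ultimately have "r * prod_list rs \<le> exp (r - 1) * exp (sum_list rs - length rs)"
    using Cons by (intro mult_mono) auto
  then show ?case by (simp add: exp_add[symmetric] algebra_simps)
qed simp

lemma prod_list_affine_ge:
  fixes rs :: "real list"
  assumes "\<forall>r \<in> set rs. 0 \<le> r" and a: "0 \<le> a" and b: "0 \<le> b"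
  shows "a ^ length rs * (a + b * sum_list rs) \<le> a * prod_list (map (\<lambda>r. a + b * r) rs)"
  using assms(1)
proof (induction rs)
  case (Cons r rs)
  then have r: "0 \<le> r" and s: "0 \<le> sum_list rs" by (auto intro: sum_list_nonneg)
  have "a ^ length (r # rs) * (a + b * sum_list (r # rs))
      \<le> (a + b * r) * (a ^ length rs * (a + b * sum_list rs))"
    using a b r s by (simp add: algebra_simps)
  also have "\<dots> \<le> (a + b * r) * (a * prod_list (map (\<lambda>r. a + b * r) rs))"
    using Cons a b r by (intro mult_left_mono) auto
  finally show ?case by (simp add: mult_ac)
qed simp

text \<open>Divided by \<open>1 - t\<close>, the left-hand side of the hypothesis is \<open>1 + (c - n) t + O(t\<^sup>2)\<close>;
  Bernoulli's inequality makes the error term explicit.\<close>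

lemma le_of_affine_power_bound:
  fixes c :: real
  assumes n: "0 < n" and bound: "\<And>t. 0 < t \<Longrightarrow> t < 1 \<Longrightarrow> (1 - t) ^ n * (1 - t + t * c) \<le> 1 - t"
  shows "c \<le> n"
proof (rule ccontr)
  assume "\<not> c \<le> n"
  then have c: "real n < c" by simp
  define k where "k = n - 1"
  define D where "D = real k * (c - 1) + c"
  define t where "t = (c - n) / (2 * D)"
  have n_k: "n = Suc k" using n by (simp add: k_def)
  have c1: "1 < c" using c n by linarith
  have D: "c \<le> D" using c1 by (simp add: D_def)
  have t0: "0 < t" and t1: "t < 1" using c D c1 by (auto simp: t_def field_simps)
  have "(1 - t) * ((1 - t) ^ k * (1 - t + t * c)) \<le> (1 - t) * 1"
    using bound[OF t0 t1] by (simp add: n_k mult_ac)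
  then have "(1 - t) ^ k * (1 - t + t * c) \<le> 1" using t1 by simp
  moreover have "1 - k * t \<le> (1 - t) ^ k"
    using Bernoulli_inequality[of "- t" k] t1 by simp
  moreover have "0 \<le> 1 - t + t * c" using t0 t1 c1 by (simp add: add_nonneg_pos)
  ultimately have "(1 - k * t) * (1 - t + t * c) \<le> 1"
    by (meson mult_right_mono order_trans)
  then have "t * (c - n) \<le> t * (k * (c - 1) * t)"
    by (simp add: n_k algebra_simps)
  then have "c - n \<le> k * (c - 1) * t" using t0 by simp
  also have "\<dots> \<le> D * t" using c1 t0 by (simp add: D_def)
  also have "\<dots> = (c - n) / 2" using D c1 by (simp add: t_def)
  finally show False using c by simp
qed

section \<open>Spectra and inverses of real matrices\<close>

definition mat_trace :: "'a::comm_ring_1 mat \<Rightarrow> 'a" where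
  "mat_trace A = (\<Sum>i<dim_row A. A $$ (i, i))"

lemma mat_trace_mult_comm:
  assumes "A \<in> carrier_mat n k" "B \<in> carrier_mat k n"
  shows "mat_trace (A * B) = mat_trace (B * A)"
proof -
  have "mat_trace (A * B) = (\<Sum>i<n. \<Sum>j<k. A $$ (i, j) * B $$ (j, i))"
    using assms by (auto simp: mat_trace_def scalar_prod_def lessThan_atLeast0 intro!: sum.cong)
  also have "\<dots> = (\<Sum>j<k. \<Sum>i<n. B $$ (j, i) * A $$ (i, j))"
    by (subst sum.swap) (simp add: mult.commute)
  also have "\<dots> = mat_trace (B * A)"
    using assms by (auto simp: mat_trace_def scalar_prod_def lessThan_atLeast0 intro!: sum.cong)
  finally show ?thesis .
qed

lemma det_affine_and_trace_eigenvalues: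
  fixes C :: "complex mat"
  assumes C: "C \<in> carrier_mat n n" and cp: "char_poly C = (\<Prod>e\<leftarrow>es. [:- e, 1:])"
  shows "det (a \<cdot>\<^sub>m 1\<^sub>m n + b \<cdot>\<^sub>m C) = prod_list (map (\<lambda>e. a + b * e) es)"
    and "mat_trace C = sum_list es"
proof -
  obtain T P Q where "schur_decomposition C es = (T, P, Q)" by (cases "schur_decomposition C es")
  from schur_decomposition[OF C cp this] have sim: "similar_mat_wit C T P Q"
    and ut: "upper_triangular T" and diag: "diag_mat T = es" by auto
  from similar_mat_witD2[OF C sim] have T: "T \<in> carrier_mat n n" and P: "P \<in> carrier_mat n n"
    and Q: "Q \<in> carrier_mat n n" and QP: "Q * P = 1\<^sub>m n" and CT: "C = P * T * Q" by auto
  have "similar_mat (char_matrix (b \<cdot>\<^sub>m C) (- a)) (char_matrix (b \<cdot>\<^sub>m T) (- a))"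
    using similar_mat_wit_char_matrix[OF similar_mat_wit_smult[OF sim]]
    unfolding similar_mat_def by blast
  moreover have "char_matrix (b \<cdot>\<^sub>m C) (- a) = a \<cdot>\<^sub>m 1\<^sub>m n + b \<cdot>\<^sub>m C"
    using C by (intro eq_matI) (auto simp: char_matrix_def)
  moreover have "char_matrix (b \<cdot>\<^sub>m T) (- a) = a \<cdot>\<^sub>m 1\<^sub>m n + b \<cdot>\<^sub>m T"
    using T by (intro eq_matI) (auto simp: char_matrix_def)
  ultimately have "det (a \<cdot>\<^sub>m 1\<^sub>m n + b \<cdot>\<^sub>m C) = det (a \<cdot>\<^sub>m 1\<^sub>m n + b \<cdot>\<^sub>m T)"
    by (metis det_similar)
  also have "\<dots> = prod_list (diag_mat (a \<cdot>\<^sub>m 1\<^sub>m n + b \<cdot>\<^sub>m T))"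
    using ut T by (intro det_upper_triangular) (auto simp: upper_triangular_def)
  also have "diag_mat (a \<cdot>\<^sub>m 1\<^sub>m n + b \<cdot>\<^sub>m T) = map (\<lambda>e. a + b * e) es"
    using T diag by (auto simp: diag_mat_def)
  finally show "det (a \<cdot>\<^sub>m 1\<^sub>m n + b \<cdot>\<^sub>m C) = prod_list (map (\<lambda>e. a + b * e) es)" .
  have "mat_trace C = mat_trace (Q * (P * T))"
    unfolding CT using P T Q by (intro mat_trace_mult_comm) auto
  also have "Q * (P * T) = T"
    using QP T by (simp add: assoc_mult_mat[OF Q P T, symmetric])
  also have "mat_trace T = sum_list es"
    using T by (simp add: diag[symmetric] mat_trace_def diag_mat_def lessThan_atLeast0
        interv_sum_list_conv_sum_set_nat)
  finally show "mat_trace C = sum_list es" .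
qed

text \<open>Positive (semi)definiteness is tested on complex vectors, so that it applies directly to
  complex eigenvectors; for real symmetric matrices this is the usual notion.\<close>

definition psd_mat :: "nat \<Rightarrow> real mat \<Rightarrow> bool" where
  "psd_mat n A \<longleftrightarrow> (\<forall>x \<in> carrier_vec n. 0 \<le> (map_mat complex_of_real A *\<^sub>v x) \<bullet>c x)"

definition pd_mat :: "nat \<Rightarrow> real mat \<Rightarrow> bool" where
  "pd_mat n A \<longleftrightarrow> (\<forall>x \<in> carrier_vec n. x \<noteq> 0\<^sub>v n \<longrightarrow> 0 < (map_mat complex_of_real A *\<^sub>v x) \<bullet>c x)"

lemma pd_mat_one: "pd_mat n (1\<^sub>m n)"
proof -
  have "map_mat complex_of_real (1\<^sub>m n) = 1\<^sub>m n" by (intro eq_matI) auto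
  then show ?thesis unfolding pd_mat_def by simp
qed

lemma eigenvalue_inverse_mult_psd_nonneg:
  fixes A S B :: "real mat"
  assumes A: "A \<in> carrier_mat n n" and S: "S \<in> carrier_mat n n" and B: "B \<in> carrier_mat n n"
    and AS: "A * S = 1\<^sub>m n" and pd: "pd_mat n A" and psd: "psd_mat n B"
    and e: "eigenvalue (map_mat complex_of_real (S * B)) e"
  shows "0 \<le> e"
proof -
  let ?Ac = "map_mat complex_of_real A" and ?Bc = "map_mat complex_of_real B"
    and ?Cc = "map_mat complex_of_real (S * B)"
  obtain x where x: "x \<in> carrier_vec n" "x \<noteq> 0\<^sub>v n" "?Cc *\<^sub>v x = e \<cdot>\<^sub>v x"
    using e S B unfolding eigenvalue_def eigenvector_def by auto
  have "?Ac * ?Cc = map_mat complex_of_real (A * (S * B))"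
    using S B by (intro of_real_hom.mat_hom_mult[symmetric, OF A]) auto
  also have "A * (S * B) = B"
    using A S B AS by (simp add: assoc_mult_mat[symmetric, of A n n S n B n])
  finally have "?Bc *\<^sub>v x = (?Ac * ?Cc) *\<^sub>v x" by simp
  also have "\<dots> = ?Ac *\<^sub>v (?Cc *\<^sub>v x)"
    using A S B x(1) by (intro assoc_mult_mat_vec) auto
  also have "\<dots> = e \<cdot>\<^sub>v (?Ac *\<^sub>v x)"
    using x(3) mult_mat_vec[of ?Ac n n x e] A x(1) by simp
  finally have "(?Bc *\<^sub>v x) \<bullet>c x = e * ((?Ac *\<^sub>v x) \<bullet>c x)"
    using A x(1) by (simp add: smult_scalar_prod_distrib[of _ n])
  moreover have "0 < (?Ac *\<^sub>v x) \<bullet>c x" and "0 \<le> (?Bc *\<^sub>v x) \<bullet>c x"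
    using pd psd x unfolding pd_mat_def psd_mat_def by auto
  ultimately show ?thesis
    by (auto simp: less_eq_complex_def less_complex_def zero_le_mult_iff)
qed

lemma real_mat_nonneg_spectrum:
  fixes C :: "real mat"
  assumes C: "C \<in> carrier_mat n n"
    and nonneg: "\<And>e. eigenvalue (map_mat complex_of_real C) e \<Longrightarrow> 0 \<le> e"
  obtains rs where "length rs = n" "\<forall>r \<in> set rs. 0 \<le> r"
    "\<forall>a b. det (a \<cdot>\<^sub>m 1\<^sub>m n + b \<cdot>\<^sub>m C) = prod_list (map (\<lambda>r. a + b * r) rs)"
    "mat_trace C = sum_list rs"
proof -
  let ?Cc = "map_mat complex_of_real C"
  have Cc: "?Cc \<in> carrier_mat n n" using C by simp
  obtain es where cp: "char_poly ?Cc = (\<Prod>e\<leftarrow>es. [:- e, 1:])" and len: "length es = n"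
    using char_poly_factorized[OF Cc] by blast
  have es_nonneg: "0 \<le> e" if "e \<in> set es" for e
  proof (rule nonneg)
    have "poly (char_poly ?Cc) e = 0"
      unfolding cp poly_prod_list prod_list_zero_iff using that by force
    then show "eigenvalue ?Cc e" using eigenvalue_root_char_poly[OF Cc] by simp
  qed
  then have es: "es = map (complex_of_real \<circ> Re) es"
    by (intro map_idI[symmetric]) (auto simp: less_eq_complex_def complex_eq_iff)
  define rs where "rs = map Re es"
  have det: "\<forall>a b. det (a \<cdot>\<^sub>m 1\<^sub>m n + b \<cdot>\<^sub>m C) = prod_list (map (\<lambda>r. a + b * r) rs)"
  proof (intro allI)
    fix a b :: real
    have "map_mat complex_of_real (a \<cdot>\<^sub>m 1\<^sub>m n + b \<cdot>\<^sub>m C) = of_real a \<cdot>\<^sub>m 1\<^sub>m n + of_real b \<cdot>\<^sub>m ?Cc"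
      using C by (intro eq_matI) auto
    then have "complex_of_real (det (a \<cdot>\<^sub>m 1\<^sub>m n + b \<cdot>\<^sub>m C))
        = prod_list (map (\<lambda>e. of_real a + of_real b * e) es)"
      using det_affine_and_trace_eigenvalues(1)[OF Cc cp] by (metis of_real_hom.hom_det)
    also have "\<dots> = complex_of_real (prod_list (map (\<lambda>r. a + b * r) rs))"
      by (subst es) (simp add: rs_def of_real_hom.hom_prod_list o_def)
    finally show "det (a \<cdot>\<^sub>m 1\<^sub>m n + b \<cdot>\<^sub>m C) = prod_list (map (\<lambda>r. a + b * r) rs)"
      by (simp only: of_real_eq_iff)
  qed
  have trace: "mat_trace C = sum_list rs"
  proof -
    have "complex_of_real (mat_trace C) = mat_trace ?Cc"
      using C by (simp add: mat_trace_def)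
    also have "\<dots> = complex_of_real (sum_list rs)"
      by (subst det_affine_and_trace_eigenvalues(2)[OF Cc cp], subst es)
        (simp add: rs_def of_real_hom.hom_sum_list o_def)
    finally show ?thesis by (simp only: of_real_eq_iff)
  qed
  have "length rs = n" "\<forall>r \<in> set rs. 0 \<le> r"
    using len es_nonneg by (auto simp: rs_def less_eq_complex_def)
  from that[OF this det trace] show thesis .
qed

lemma psd_mat_det_nonneg:
  assumes A: "A \<in> carrier_mat n n" and psd: "psd_mat n A"
  shows "0 \<le> det A"
proof -
  have "0 \<le> e" if "eigenvalue (map_mat complex_of_real A) e" for e
  proof (rule eigenvalue_inverse_mult_psd_nonneg[OF one_carrier_mat one_carrier_mat A _
        pd_mat_one psd])
    show "1\<^sub>m n * 1\<^sub>m n = (1\<^sub>m n :: real mat)" by simp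
    show "eigenvalue (map_mat complex_of_real (1\<^sub>m n * A)) e" using that A by simp
  qed
  then obtain rs where rs: "length rs = n" "\<forall>r \<in> set rs. 0 \<le> r"
    "\<forall>a b. det (a \<cdot>\<^sub>m 1\<^sub>m n + b \<cdot>\<^sub>m A) = prod_list (map (\<lambda>r. a + b * r) rs)"
    "mat_trace A = sum_list rs"
    by (rule real_mat_nonneg_spectrum[OF A])
  have "0 \<cdot>\<^sub>m 1\<^sub>m n + 1 \<cdot>\<^sub>m A = A" using A by (intro eq_matI) auto
  then have "det A = prod_list (map (\<lambda>r. 0 + 1 * r) rs)" using rs(3) by metis
  then show ?thesis using rs(2) by (simp add: prod_list_nonneg)
qed

lemma mat_inv_eqI:
  assumes A: "A \<in> carrier_mat n n" and S: "S \<in> carrier_mat n n"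
    and AS: "A * S = 1\<^sub>m n" and SA: "S * A = 1\<^sub>m n"
  shows "mat_inv n A = S"
  unfolding mat_inv_def
proof (rule the_equality)
  show "S \<in> carrier_mat n n \<and> A * S = 1\<^sub>m n \<and> S * A = 1\<^sub>m n" using S AS SA by blast
  fix S' assume S': "S' \<in> carrier_mat n n \<and> A * S' = 1\<^sub>m n \<and> S' * A = 1\<^sub>m n"
  then have "S' = S' * (A * S)" using AS by auto
  also have "\<dots> = (S' * A) * S" using S' A S by (intro assoc_mult_mat[symmetric]) auto
  finally show "S' = S" using S' S by simp
qed

lemma mat_inv:
  fixes A :: "real mat"
  assumes A: "A \<in> carrier_mat n n" and det: "det A \<noteq> 0"
  shows "mat_inv n A \<in> carrier_mat n n" "A * mat_inv n A = 1\<^sub>m n" "mat_inv n A * A = 1\<^sub>m n"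
proof -
  define S where "S = (1 / det A) \<cdot>\<^sub>m adj_mat A"
  note adj = adj_mat[OF A]
  have S: "S \<in> carrier_mat n n" using adj by (simp add: S_def)
  have "A * S = 1\<^sub>m n"
    using adj det by (auto simp: S_def mult_smult_distrib[OF A adj(1)] intro!: eq_matI)
  moreover have "S * A = 1\<^sub>m n"
    using adj det by (auto simp: S_def mult_smult_assoc_mat[OF adj(1) A] intro!: eq_matI)
  ultimately show "mat_inv n A \<in> carrier_mat n n" "A * mat_inv n A = 1\<^sub>m n"
    "mat_inv n A * A = 1\<^sub>m n"
    using mat_inv_eqI[OF A S] S by simp_all
qed

lemma mat_inv_symmetric:
  fixes A :: "real mat"
  assumes A: "A \<in> carrier_mat n n" and det: "det A \<noteq> 0" and sym: "transpose_mat A = A"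
  shows "transpose_mat (mat_inv n A) = mat_inv n A"
proof -
  note S = mat_inv[OF A det]
  have "A * transpose_mat (mat_inv n A) = 1\<^sub>m n"
    using transpose_mult[OF S(1) A] S(3) sym by simp
  moreover have "transpose_mat (mat_inv n A) * A = 1\<^sub>m n"
    using transpose_mult[OF A S(1)] S(2) sym by simp
  ultimately show ?thesis
    using mat_inv_eqI[OF A, of "transpose_mat (mat_inv n A)"] S(1) by simp
qed

section \<open>Weighted sums of outer products\<close>

definition quad_form :: "nat \<Rightarrow> real mat \<Rightarrow> (nat \<Rightarrow> real) \<Rightarrow> real" where
  "quad_form n S a = (\<Sum>i<n. \<Sum>j<n. a i * S $$ (i, j) * a j)"

definition weighted_outer_sum ::
    "nat \<Rightarrow> 'p set \<Rightarrow> ('p \<Rightarrow> real) \<Rightarrow> ('p \<Rightarrow> nat \<Rightarrow> real) \<Rightarrow> real mat" where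
  "weighted_outer_sum n P c a = mat n n (\<lambda>(i, j). \<Sum>p\<in>P. c p * a p i * a p j)"

lemma weighted_outer_sum_carrier [simp]: "weighted_outer_sum n P c a \<in> carrier_mat n n"
  by (simp add: weighted_outer_sum_def)

lemma transpose_weighted_outer_sum [simp]:
  "transpose_mat (weighted_outer_sum n P c a) = weighted_outer_sum n P c a"
  by (intro eq_matI) (auto simp: weighted_outer_sum_def mult_ac)

lemma weighted_outer_sum_linear:
  "weighted_outer_sum n P (\<lambda>p. s * c p + t * d p) a
     = s \<cdot>\<^sub>m weighted_outer_sum n P c a + t \<cdot>\<^sub>m weighted_outer_sum n P d a"
  by (intro eq_matI)
    (auto simp: weighted_outer_sum_def algebra_simps sum.distrib sum_distrib_left)

lemma trace_mult_weighted_outer_sum: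
  assumes S: "S \<in> carrier_mat n n"
  shows "mat_trace (S * weighted_outer_sum n P c a) = (\<Sum>p\<in>P. c p * quad_form n S (a p))"
proof -
  have "mat_trace (S * weighted_outer_sum n P c a)
      = (\<Sum>i<n. \<Sum>j<n. S $$ (i, j) * (\<Sum>p\<in>P. c p * a p j * a p i))"
    using S by (auto simp: mat_trace_def scalar_prod_def weighted_outer_sum_def lessThan_atLeast0
        intro!: sum.cong)
  also have "\<dots> = (\<Sum>p\<in>P. c p * quad_form n S (a p))"
    by (simp add: quad_form_def sum_distrib_left sum.swap[of _ P] mult_ac)
  finally show ?thesis .
qed

lemma weighted_outer_sum_mult_vec:
  assumes x: "x \<in> carrier_vec n" and i: "i < n"
  shows "(map_mat complex_of_real (weighted_outer_sum n P c a) *\<^sub>v x) $ i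
      = (\<Sum>p\<in>P. of_real (c p * a p i) * (\<Sum>j<n. of_real (a p j) * x $ j))"
  using x i by (auto simp: weighted_outer_sum_def scalar_prod_def lessThan_atLeast0 of_real_sum
      sum_distrib_left sum_distrib_right sum.swap[of _ P] mult_ac intro!: sum.cong)

lemma herm_form_weighted_outer_sum:
  assumes x: "x \<in> carrier_vec n"
  shows "(map_mat complex_of_real (weighted_outer_sum n P c a) *\<^sub>v x) \<bullet>c x
      = of_real (\<Sum>p\<in>P. c p * (cmod (\<Sum>j<n. of_real (a p j) * x $ j))\<^sup>2)"
proof -
  let ?y = "\<lambda>p. \<Sum>j<n. complex_of_real (a p j) * x $ j"
  have "(map_mat complex_of_real (weighted_outer_sum n P c a) *\<^sub>v x) \<bullet>c x
      = (\<Sum>i<n. (map_mat complex_of_real (weighted_outer_sum n P c a) *\<^sub>v x) $ i * cnj (x $ i))"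
    using x by (simp add: scalar_prod_def lessThan_atLeast0)
  also have "\<dots> = (\<Sum>i<n. \<Sum>p\<in>P. of_real (c p) * ?y p * cnj (of_real (a p i) * x $ i))"
    by (intro sum.cong refl) (simp add: weighted_outer_sum_mult_vec[OF x] sum_distrib_left mult_ac)
  also have "\<dots> = (\<Sum>p\<in>P. of_real (c p) * (?y p * cnj (?y p)))"
    by (simp add: sum.swap[of _ P] sum_distrib_left cnj_sum mult_ac)
  also have "\<dots> = of_real (\<Sum>p\<in>P. c p * (cmod (?y p))\<^sup>2)"
    unfolding of_real_sum of_real_mult complex_norm_square ..
  finally show ?thesis .
qed

lemma weighted_outer_sum_psd:
  assumes "\<forall>p\<in>P. 0 \<le> c p"
  shows "psd_mat n (weighted_outer_sum n P c a)"
  unfolding psd_mat_def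
proof
  fix x :: "complex vec" assume x: "x \<in> carrier_vec n"
  have "0 \<le> (\<Sum>p\<in>P. c p * (cmod (\<Sum>j<n. of_real (a p j) * x $ j))\<^sup>2)"
    using assms by (intro sum_nonneg) simp
  then show "0 \<le> (map_mat complex_of_real (weighted_outer_sum n P c a) *\<^sub>v x) \<bullet>c x"
    unfolding herm_form_weighted_outer_sum[OF x] by (simp only: less_eq_complex_def) simp
qed

lemma weighted_outer_sum_pd:
  assumes P: "finite P" and c: "\<forall>p\<in>P. 0 \<le> c p" and det: "det (weighted_outer_sum n P c a) \<noteq> 0"
  shows "pd_mat n (weighted_outer_sum n P c a)"
  unfolding pd_mat_def
proof (intro ballI impI)
  fix x :: "complex vec" assume x: "x \<in> carrier_vec n" "x \<noteq> 0\<^sub>v n"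
  let ?Wc = "map_mat complex_of_real (weighted_outer_sum n P c a)"
  let ?y = "\<lambda>p. \<Sum>j<n. complex_of_real (a p j) * x $ j"
  let ?R = "\<Sum>p\<in>P. c p * (cmod (?y p))\<^sup>2"
  have nonneg: "\<forall>p\<in>P. 0 \<le> c p * (cmod (?y p))\<^sup>2" using c by simp
  have "?R \<noteq> 0"
  proof
    assume "?R = 0"
    then have "\<forall>p\<in>P. c p * (cmod (?y p))\<^sup>2 = 0"
      using sum_nonneg_eq_0_iff[OF P, of "\<lambda>p. c p * (cmod (?y p))\<^sup>2"] nonneg \<open>?R = 0\<close>
      by simp
    then have zero: "\<forall>p\<in>P. c p = 0 \<or> ?y p = 0" by simp
    have "?Wc *\<^sub>v x = 0\<^sub>v n"
    proof (rule eq_vecI)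
      fix i assume "i < dim_vec (0\<^sub>v n :: complex vec)"
      then have i: "i < n" by simp
      show "(?Wc *\<^sub>v x) $ i = 0\<^sub>v n $ i"
        unfolding weighted_outer_sum_mult_vec[OF x(1) i] using zero i
        by (auto intro!: sum.neutral)
    qed (simp add: weighted_outer_sum_def)
    then have "det ?Wc = 0"
      using x det_0_iff_vec_prod_zero[of ?Wc n] by auto
    then show False using det by simp
  qed
  moreover have "0 \<le> ?R" using nonneg by (intro sum_nonneg) blast
  ultimately show "0 < (?Wc *\<^sub>v x) \<bullet>c x"
    unfolding herm_form_weighted_outer_sum[OF x(1)] by (simp add: less_complex_def)
qed

section \<open>The Bradley--Terry information matrix\<close>

lemma finite_pairs: "finite (pairs m)"
  by (rule finite_subset[of _ "{..<m} \<times> {..<m}"]) (auto simp: pairs_def)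

lemma bt_lambda_commute: "bt_lambda \<pi> u v = bt_lambda \<pi> v u"
  by (simp add: bt_lambda_def add.commute mult.commute)

lemma bt_lambda_pos: "0 < \<pi> u \<Longrightarrow> 0 < \<pi> v \<Longrightarrow> 0 < bt_lambda \<pi> u v"
  by (simp add: bt_lambda_def)

lemma le_Gamma_bar_iff:
  assumes "0 < \<pi> u" "0 < \<pi> v"
  shows "x \<le> Gamma_bar m \<pi> u v \<longleftrightarrow> bt_lambda \<pi> u v * x \<le> real m - 1"
  using bt_lambda_pos[OF assms] by (simp add: Gamma_bar_def pos_le_divide_eq mult.commute)

definition incidence :: "nat \<Rightarrow> nat \<Rightarrow> nat \<Rightarrow> real" where
  "incidence u v i = (if i = u then 1 else 0) - (if i = v then 1 else 0)"

lemma sum_mult_incidence: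
  assumes "u < v" "v \<le> n"
  shows "(\<Sum>i<n. f i * incidence u v i) = f u - (if v < n then f v else 0)"
  using assms
  by (simp add: incidence_def right_diff_distrib sum_subtractf if_distrib[of "\<lambda>x. f _ * x"]
      cong: if_cong)

lemma info_mat_entry:
  assumes i: "i < m" and j: "j < m"
  shows "info_mat m \<pi> w $$ (i, j)
    = (\<Sum>(u, v)\<in>pairs m. w u v * bt_lambda \<pi> u v * incidence u v i * incidence u v j)"
proof -
  define c where "c = (\<lambda>(u, v). w u v * bt_lambda \<pi> u v)"
  have c_minmax: "c (min i t, max i t) = bt_lambda \<pi> i t * sym_w w i t" for t
    by (cases "i \<le> t") (auto simp: c_def sym_w_def min_def max_def bt_lambda_commute)
  have rhs: "(\<Sum>(u, v)\<in>pairs m. w u v * bt_lambda \<pi> u v * incidence u v i * incidence u v j)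
      = (\<Sum>p\<in>pairs m. c p * (incidence (fst p) (snd p) i * incidence (fst p) (snd p) j))"
    by (simp add: c_def split_def mult.assoc)
  show ?thesis
  proof (cases "i = j")
    case True
    have "bij_betw (\<lambda>t. (min i t, max i t)) ({0..<m} - {i}) {p \<in> pairs m. i = fst p \<or> i = snd p}"
      by (rule bij_betw_byWitness[where f' = "\<lambda>p. if fst p = i then snd p else fst p"])
        (use i in \<open>auto simp: pairs_def min_def max_def split: if_splits\<close>)
    have "(\<Sum>p\<in>pairs m. c p * (incidence (fst p) (snd p) i * incidence (fst p) (snd p) i))
        = (\<Sum>p\<in>pairs m. if i = fst p \<or> i = snd p then c p else 0)"
      by (intro sum.cong refl) (auto simp: incidence_def pairs_def)
    also have "\<dots> = (\<Sum>p | p \<in> pairs m \<and> (i = fst p \<or> i = snd p). c p)"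
      by (simp add: sum.inter_filter[OF finite_pairs])
    also have "\<dots> = (\<Sum>t\<in>{0..<m} - {i}. c (min i t, max i t))"
      by (rule sum.reindex_bij_betw[symmetric]) fact
    also have "\<dots> = info_mat m \<pi> w $$ (i, i)"
      using i by (simp add: info_mat_def c_minmax)
    finally show ?thesis using True rhs by simp
  next
    case False
    have "(\<Sum>p\<in>pairs m. c p * (incidence (fst p) (snd p) i * incidence (fst p) (snd p) j))
        = (\<Sum>p\<in>pairs m. if p = (min i j, max i j) then - c p else 0)"
      using False by (intro sum.cong refl) (auto simp: incidence_def pairs_def min_def max_def)
    also have "\<dots> = - c (min i j, max i j)"
    proof -
      have "(min i j, max i j) \<in> pairs m"
        using i j False by (simp add: pairs_def min_def max_def)
      then show ?thesis by (simp add: finite_pairs)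
    qed
    also have "\<dots> = info_mat m \<pi> w $$ (i, j)"
      using i j False by (simp add: info_mat_def c_minmax)
    finally show ?thesis using rhs by simp
  qed
qed

lemma info_mat_red_carrier: "info_mat_red m \<pi> w \<in> carrier_mat (m - 1) (m - 1)"
  by (simp add: info_mat_red_def)

lemma info_mat_red_eq_weighted_outer_sum:
  "info_mat_red m \<pi> w = weighted_outer_sum (m - 1) (pairs m)
     (\<lambda>(u, v). w u v * bt_lambda \<pi> u v) (\<lambda>(u, v). incidence u v)"
  by (intro eq_matI)
    (auto simp: info_mat_red_def weighted_outer_sum_def info_mat_entry split_def)

lemma info_mat_red_psd:
  assumes "\<forall>i<m. 0 < \<pi> i" and "\<forall>(u, v)\<in>pairs m. 0 \<le> w u v"
  shows "psd_mat (m - 1) (info_mat_red m \<pi> w)"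
proof -
  have "\<forall>p\<in>pairs m. 0 \<le> (\<lambda>(u, v). w u v * bt_lambda \<pi> u v) p"
    using assms by (auto simp: pairs_def intro!: mult_nonneg_nonneg less_imp_le[OF bt_lambda_pos])
  then show ?thesis
    unfolding info_mat_red_eq_weighted_outer_sum by (rule weighted_outer_sum_psd)
qed

section \<open>Optimality conditions for a nonsingular design\<close>

locale bt_nonsingular_design =
  fixes m :: nat and \<pi> :: "nat \<Rightarrow> real" and w :: "nat \<Rightarrow> nat \<Rightarrow> real"
  assumes two_le_m: "2 \<le> m" and \<pi>_pos: "\<forall>i<m. 0 < \<pi> i" and design: "is_design m w"
    and det_nonzero: "det (info_mat_red m \<pi> w) \<noteq> 0"
begin

abbreviation Sigma_mat :: "real mat" where
  "Sigma_mat \<equiv> mat_inv (m - 1) (info_mat_red m \<pi> w)"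

lemmas Sigma_mat_inverse = mat_inv[OF info_mat_red_carrier det_nonzero]

lemma w_nonneg: "\<forall>(u, v)\<in>pairs m. 0 \<le> w u v"
  using design by (simp add: is_design_def)

lemma Sigma_mat_symmetric:
  assumes "i < m - 1" "j < m - 1"
  shows "Sigma_mat $$ (j, i) = Sigma_mat $$ (i, j)"
proof -
  have "transpose_mat Sigma_mat = Sigma_mat"
    by (rule mat_inv_symmetric[OF info_mat_red_carrier det_nonzero])
      (simp add: info_mat_red_eq_weighted_outer_sum)
  moreover have "Sigma_mat $$ (j, i) = transpose_mat Sigma_mat $$ (i, j)"
    using assms Sigma_mat_inverse(1) by simp
  ultimately show ?thesis by simp
qed

lemma Gamma_eq_quad_form:
  assumes "u < v" "v < m"
  shows "Gamma m \<pi> w u v = quad_form (m - 1) Sigma_mat (incidence u v)"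
proof -
  have v: "v \<le> m - 1" using assms by simp
  have "quad_form (m - 1) Sigma_mat (incidence u v)
      = (\<Sum>i<m - 1. (\<Sum>j<m - 1. Sigma_mat $$ (i, j) * incidence u v j) * incidence u v i)"
    by (simp add: quad_form_def sum_distrib_left mult_ac)
  also have "\<dots> = (\<Sum>i<m - 1. (Sigma_mat $$ (i, u) - (if v < m - 1 then Sigma_mat $$ (i, v) else 0))
      * incidence u v i)"
    by (simp only: sum_mult_incidence[OF assms(1) v])
  also have "\<dots> = Sigma_mat $$ (u, u) - (if v < m - 1 then Sigma_mat $$ (u, v) else 0)
      - (if v < m - 1 then Sigma_mat $$ (v, u) - Sigma_mat $$ (v, v) else 0)"
    by (simp only: sum_mult_incidence[OF assms(1) v]) simp
  also have "\<dots> = Gamma m \<pi> w u v"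
    using assms Sigma_mat_symmetric[of u v] by (auto simp: Gamma_def Let_def)
  finally show ?thesis ..
qed

lemma info_mat_red_pd: "pd_mat (m - 1) (info_mat_red m \<pi> w)"
proof -
  have "\<forall>p\<in>pairs m. 0 \<le> (\<lambda>(u, v). w u v * bt_lambda \<pi> u v) p"
    using w_nonneg \<pi>_pos
    by (auto simp: pairs_def intro!: mult_nonneg_nonneg less_imp_le[OF bt_lambda_pos])
  then show ?thesis
    using det_nonzero unfolding info_mat_red_eq_weighted_outer_sum
    by (intro weighted_outer_sum_pd finite_pairs)
qed

lemma det_info_mat_red_pos: "0 < det (info_mat_red m \<pi> w)"
  using psd_mat_det_nonneg[OF info_mat_red_carrier info_mat_red_psd[OF \<pi>_pos w_nonneg]]
    det_nonzero by simp

lemma trace_Sigma_mat_info_mat_red: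
  "mat_trace (Sigma_mat * info_mat_red m \<pi> w')
     = (\<Sum>(u, v)\<in>pairs m. w' u v * bt_lambda \<pi> u v * Gamma m \<pi> w u v)"
  unfolding info_mat_red_eq_weighted_outer_sum[of m \<pi> w']
    trace_mult_weighted_outer_sum[OF Sigma_mat_inverse(1)]
  by (intro sum.cong refl) (auto simp: pairs_def Gamma_eq_quad_form)

lemma det_affine_info_mat_red:
  assumes w': "\<forall>(u, v)\<in>pairs m. 0 \<le> w' u v"
  obtains rs where "length rs = m - 1" "\<forall>r \<in> set rs. 0 \<le> r"
    "\<forall>a b. det (a \<cdot>\<^sub>m info_mat_red m \<pi> w + b \<cdot>\<^sub>m info_mat_red m \<pi> w')
       = det (info_mat_red m \<pi> w) * prod_list (map (\<lambda>r. a + b * r) rs)"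
    "sum_list rs = (\<Sum>(u, v)\<in>pairs m. w' u v * bt_lambda \<pi> u v * Gamma m \<pi> w u v)"
proof -
  let ?L = "info_mat_red m \<pi> w" and ?M = "info_mat_red m \<pi> w'"
  note L = info_mat_red_carrier[of m \<pi> w] and M = info_mat_red_carrier[of m \<pi> w']
  have C: "Sigma_mat * ?M \<in> carrier_mat (m - 1) (m - 1)" using Sigma_mat_inverse(1) M by simp
  have "0 \<le> e" if "eigenvalue (map_mat complex_of_real (Sigma_mat * ?M)) e" for e
    by (rule eigenvalue_inverse_mult_psd_nonneg[OF L Sigma_mat_inverse(1) M Sigma_mat_inverse(2)
          info_mat_red_pd info_mat_red_psd[OF \<pi>_pos w'] that])
  then obtain rs where rs: "length rs = m - 1" "\<forall>r \<in> set rs. 0 \<le> r"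
    "\<forall>a b. det (a \<cdot>\<^sub>m 1\<^sub>m (m - 1) + b \<cdot>\<^sub>m (Sigma_mat * ?M)) = prod_list (map (\<lambda>r. a + b * r) rs)"
    "mat_trace (Sigma_mat * ?M) = sum_list rs"
    by (rule real_mat_nonneg_spectrum[OF C])
  have LC: "?L * (Sigma_mat * ?M) = ?M"
    using assoc_mult_mat[OF L Sigma_mat_inverse(1) M] Sigma_mat_inverse(2) M by simp
  have det: "\<forall>a b. det (a \<cdot>\<^sub>m ?L + b \<cdot>\<^sub>m ?M) = det ?L * prod_list (map (\<lambda>r. a + b * r) rs)"
  proof (intro allI)
    fix a b :: real
    have "?L * (a \<cdot>\<^sub>m 1\<^sub>m (m - 1) + b \<cdot>\<^sub>m (Sigma_mat * ?M))
        = ?L * (a \<cdot>\<^sub>m 1\<^sub>m (m - 1)) + ?L * (b \<cdot>\<^sub>m (Sigma_mat * ?M))"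
      using C by (intro mult_add_distrib_mat[OF L]) auto
    also have "\<dots> = a \<cdot>\<^sub>m ?L + b \<cdot>\<^sub>m ?M"
      using mult_smult_distrib[OF L one_carrier_mat] mult_smult_distrib[OF L C] LC L by simp
    finally have "det (a \<cdot>\<^sub>m ?L + b \<cdot>\<^sub>m ?M)
        = det ?L * det (a \<cdot>\<^sub>m 1\<^sub>m (m - 1) + b \<cdot>\<^sub>m (Sigma_mat * ?M))"
      using C by (metis det_mult[OF L] add_carrier_mat one_carrier_mat smult_carrier_mat)
    then show "det (a \<cdot>\<^sub>m ?L + b \<cdot>\<^sub>m ?M) = det ?L * prod_list (map (\<lambda>r. a + b * r) rs)"
      using rs(3) by simp
  qed
  have "sum_list rs = (\<Sum>(u, v)\<in>pairs m. w' u v * bt_lambda \<pi> u v * Gamma m \<pi> w u v)"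
    using rs(4) trace_Sigma_mat_info_mat_red by simp
  from that[OF rs(1,2) det this] show thesis .
qed

lemma weighted_Gamma_sum_le_if_Gamma_le:
  assumes Gamma_le: "\<forall>u v. u < v \<and> v < m \<longrightarrow> Gamma m \<pi> w u v \<le> Gamma_bar m \<pi> u v"
    and w': "is_design m w'"
  shows "(\<Sum>(u, v)\<in>pairs m. w' u v * bt_lambda \<pi> u v * Gamma m \<pi> w u v) \<le> real m - 1"
proof -
  have "(\<Sum>(u, v)\<in>pairs m. w' u v * bt_lambda \<pi> u v * Gamma m \<pi> w u v)
      \<le> (\<Sum>(u, v)\<in>pairs m. w' u v * (real m - 1))"
  proof (rule sum_mono)
    fix p assume "p \<in> pairs m"
    then obtain u v where p: "p = (u, v)" "u < v" "v < m" by (auto simp: pairs_def)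
    then have "bt_lambda \<pi> u v * Gamma m \<pi> w u v \<le> real m - 1"
      using Gamma_le le_Gamma_bar_iff \<pi>_pos by auto
    moreover have "0 \<le> w' u v" using w' p by (auto simp: is_design_def pairs_def)
    ultimately show "(\<lambda>(u, v). w' u v * bt_lambda \<pi> u v * Gamma m \<pi> w u v) p
        \<le> (\<lambda>(u, v). w' u v * (real m - 1)) p"
      using p(1) by (simp add: mult.assoc mult_left_mono)
  qed
  also have "\<dots> = real m - 1"
    using w' by (simp add: is_design_def split_def sum_distrib_right[symmetric])
  finally show ?thesis .
qed

lemma det_le_if_Gamma_le:
  assumes Gamma_le: "\<forall>u v. u < v \<and> v < m \<longrightarrow> Gamma m \<pi> w u v \<le> Gamma_bar m \<pi> u v"
    and w': "is_design m w'"
  shows "det (info_mat_red m \<pi> w') \<le> det (info_mat_red m \<pi> w)"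
proof -
  have "\<forall>(u, v)\<in>pairs m. 0 \<le> w' u v" using w' by (simp add: is_design_def)
  then obtain rs where rs: "length rs = m - 1" "\<forall>r \<in> set rs. 0 \<le> r"
    "\<forall>a b. det (a \<cdot>\<^sub>m info_mat_red m \<pi> w + b \<cdot>\<^sub>m info_mat_red m \<pi> w')
       = det (info_mat_red m \<pi> w) * prod_list (map (\<lambda>r. a + b * r) rs)"
    "sum_list rs = (\<Sum>(u, v)\<in>pairs m. w' u v * bt_lambda \<pi> u v * Gamma m \<pi> w u v)"
    by (rule det_affine_info_mat_red)
  have "sum_list rs \<le> length rs"
    using rs(1,4) weighted_Gamma_sum_le_if_Gamma_le[OF Gamma_le w'] two_le_m
    by (simp add: of_nat_diff)
  then have "exp (sum_list rs - length rs) \<le> 1" by simp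
  then have prod_le: "prod_list rs \<le> 1"
    using prod_list_le_exp_sum[OF rs(2)] by linarith
  have "0 \<cdot>\<^sub>m info_mat_red m \<pi> w + 1 \<cdot>\<^sub>m info_mat_red m \<pi> w' = info_mat_red m \<pi> w'"
    by (intro eq_matI) (auto simp: info_mat_red_def)
  then have "det (info_mat_red m \<pi> w')
      = det (info_mat_red m \<pi> w) * prod_list (map (\<lambda>r. 0 + 1 * r) rs)"
    using rs(3) by metis
  then show ?thesis
    using prod_le det_info_mat_red_pos by (simp add: mult_left_le)
qed

lemma weighted_Gamma_sum_le_if_det_maximal:
  assumes max: "\<And>w'. is_design m w' \<Longrightarrow> 0 < det (info_mat_red m \<pi> w') \<Longrightarrow>
      det (info_mat_red m \<pi> w') \<le> det (info_mat_red m \<pi> w)"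
    and e: "is_design m e"
  shows "(\<Sum>(u, v)\<in>pairs m. e u v * bt_lambda \<pi> u v * Gamma m \<pi> w u v) \<le> real m - 1"
proof -
  let ?L = "info_mat_red m \<pi> w" and ?E = "info_mat_red m \<pi> e"
  have "\<forall>(u, v)\<in>pairs m. 0 \<le> e u v" using e by (simp add: is_design_def)
  then obtain rs where rs: "length rs = m - 1" "\<forall>r \<in> set rs. 0 \<le> r"
    "\<forall>a b. det (a \<cdot>\<^sub>m ?L + b \<cdot>\<^sub>m ?E) = det ?L * prod_list (map (\<lambda>r. a + b * r) rs)"
    "sum_list rs = (\<Sum>(u, v)\<in>pairs m. e u v * bt_lambda \<pi> u v * Gamma m \<pi> w u v)"
    by (rule det_affine_info_mat_red)
  define c where "c = sum_list rs"
  have c: "0 \<le> c" using rs(2) by (simp add: c_def sum_list_nonneg)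
  have "(1 - t) ^ (m - 1) * (1 - t + t * c) \<le> 1 - t" if t: "0 < t" "t < 1" for t
  proof -
    define wt where "wt u v = (1 - t) * w u v + t * e u v" for u v
    define P where "P = prod_list (map (\<lambda>r. (1 - t) + t * r) rs)"
    have "info_mat_red m \<pi> wt = (1 - t) \<cdot>\<^sub>m ?L + t \<cdot>\<^sub>m ?E"
      unfolding info_mat_red_eq_weighted_outer_sum weighted_outer_sum_linear[symmetric]
      by (simp add: wt_def split_def algebra_simps)
    then have det_wt: "det (info_mat_red m \<pi> wt) = det ?L * P"
      using rs(3) by (simp add: P_def)
    have lower: "(1 - t) ^ (m - 1) * (1 - t + t * c) \<le> (1 - t) * P"
      using prod_list_affine_ge[OF rs(2), of "1 - t" t] t rs(1) by (simp add: P_def c_def)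
    have "0 < (1 - t) ^ (m - 1) * (1 - t + t * c)" using t c by (simp add: add_pos_nonneg)
    then have "0 < (1 - t) * P" using lower by linarith
    then have "0 < P" using t by (simp add: zero_less_mult_iff)
    have "is_design m wt"
      using design e t
      by (auto simp: is_design_def wt_def split_def sum.distrib sum_distrib_left[symmetric])
    moreover have "0 < det (info_mat_red m \<pi> wt)"
      using det_wt det_info_mat_red_pos \<open>0 < P\<close> by simp
    ultimately have "det ?L * P \<le> det ?L * 1"
      using max[of wt] det_wt by simp
    then have "(1 - t) * P \<le> 1 - t"
      using det_info_mat_red_pos t by (simp add: mult_le_cancel_left)
    with lower show ?thesis by linarith
  qed
  then have "c \<le> real (m - 1)"
    by (intro le_of_affine_power_bound) (use two_le_m in auto)
  then show ?thesis
    using rs(4) two_le_m by (simp add: c_def of_nat_diff)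
qed

lemma Gamma_le_if_det_maximal:
  assumes max: "\<And>w'. is_design m w' \<Longrightarrow> 0 < det (info_mat_red m \<pi> w') \<Longrightarrow>
      det (info_mat_red m \<pi> w') \<le> det (info_mat_red m \<pi> w)"
    and uv: "u < v" "v < m"
  shows "Gamma m \<pi> w u v \<le> Gamma_bar m \<pi> u v"
proof -
  define e :: "nat \<Rightarrow> nat \<Rightarrow> real" where "e u' v' = (if (u', v') = (u, v) then 1 else 0)"
    for u' v'
  have e_sum: "(\<Sum>(u', v')\<in>pairs m. e u' v' * f u' v') = f u v" for f
  proof -
    have "(\<Sum>(u', v')\<in>pairs m. e u' v' * f u' v')
        = (\<Sum>p\<in>pairs m. if p = (u, v) then f u v else 0)"
      by (intro sum.cong refl) (auto simp: e_def split: if_splits)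
    moreover have "(u, v) \<in> pairs m" using uv by (simp add: pairs_def)
    ultimately show ?thesis by (simp add: finite_pairs)
  qed
  have "is_design m e"
    using e_sum[of "\<lambda>_ _. 1"] by (simp add: is_design_def e_def)
  from weighted_Gamma_sum_le_if_det_maximal[OF max this]
  have "bt_lambda \<pi> u v * Gamma m \<pi> w u v \<le> real m - 1"
    using e_sum[of "\<lambda>u' v'. bt_lambda \<pi> u' v' * Gamma m \<pi> w u' v'"]
    by (simp add: mult.assoc)
  then show ?thesis
    using le_Gamma_bar_iff \<pi>_pos uv by simp
qed

lemma Gamma_bar_complementary_slackness:
  assumes Gamma_le: "\<forall>u v. u < v \<and> v < m \<longrightarrow> Gamma m \<pi> w u v \<le> Gamma_bar m \<pi> u v"
    and uv: "u < v" "v < m"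
  shows "(Gamma m \<pi> w u v - Gamma_bar m \<pi> u v) * w u v = 0"
proof -
  define slack where "slack u' v' = w u' v' * (real m - 1 - bt_lambda \<pi> u' v' * Gamma m \<pi> w u' v')"
    for u' v'
  have slack_nonneg: "\<forall>(u', v')\<in>pairs m. 0 \<le> slack u' v'"
    using Gamma_le le_Gamma_bar_iff \<pi>_pos w_nonneg by (auto simp: slack_def pairs_def)
  have "mat_trace (Sigma_mat * info_mat_red m \<pi> w) = real m - 1"
    using Sigma_mat_inverse(3) two_le_m by (simp add: mat_trace_def of_nat_diff)
  then have "(\<Sum>(u', v')\<in>pairs m. w u' v' * bt_lambda \<pi> u' v' * Gamma m \<pi> w u' v') = real m - 1"
    using trace_Sigma_mat_info_mat_red[of w] by simp
  moreover have "(\<Sum>(u', v')\<in>pairs m. w u' v') = 1" using design by (simp add: is_design_def)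
  ultimately have "(\<Sum>(u', v')\<in>pairs m. slack u' v') = 0"
    by (simp add: slack_def split_def right_diff_distrib sum_subtractf sum_distrib_right[symmetric]
        mult.assoc)
  then have "slack u v = 0"
    using sum_nonneg_eq_0_iff[OF finite_pairs, where f = "\<lambda>(u', v'). slack u' v'"] slack_nonneg uv
    by (auto simp: pairs_def)
  then show ?thesis
    using bt_lambda_pos[of \<pi> u v] \<pi>_pos uv
    by (auto simp: slack_def Gamma_bar_def field_simps)
qed

end

theorem corollary4p2:
  fixes m :: nat and \<pi> :: "nat \<Rightarrow> real" and w :: "nat \<Rightarrow> nat \<Rightarrow> real"
  assumes "2 \<le> m"
    and "\<forall>i<m. 0 < \<pi> i"
    and "(\<Sum>(u, v)\<in>pairs m. w u v) = 1"
    and "det (info_mat_red m \<pi> w) \<noteq> 0"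
  shows "locally_D_optimal m \<pi> w \<longleftrightarrow>
    (\<forall>u v. u < v \<and> v < m \<longrightarrow> 0 \<le> w u v) \<and>
    (\<forall>u v. u < v \<and> v < m \<longrightarrow> Gamma m \<pi> w u v \<le> Gamma_bar m \<pi> u v) \<and>
    (\<forall>u v. u < v \<and> v < m \<longrightarrow> (Gamma m \<pi> w u v - Gamma_bar m \<pi> u v) * w u v = 0)"
proof -
  have design_iff: "is_design m w \<longleftrightarrow> (\<forall>u v. u < v \<and> v < m \<longrightarrow> 0 \<le> w u v)"
    using assms(3) by (auto simp: is_design_def pairs_def)
  show ?thesis (is "_ \<longleftrightarrow> ?nonneg \<and> ?below \<and> ?slack")
  proof
    assume opt: "locally_D_optimal m \<pi> w"
    then interpret bt_nonsingular_design m \<pi> w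
      using assms by unfold_locales (simp_all add: locally_D_optimal_def)
    have "det (info_mat_red m \<pi> w') \<le> det (info_mat_red m \<pi> w)"
      if "is_design m w'" "0 < det (info_mat_red m \<pi> w')" for w'
      using opt that det_info_mat_red_pos by (simp add: locally_D_optimal_def)
    then have ?below
      using Gamma_le_if_det_maximal by blast
    then show "?nonneg \<and> ?below \<and> ?slack"
      using Gamma_bar_complementary_slackness design design_iff by blast
  next
    assume conds: "?nonneg \<and> ?below \<and> ?slack"
    then interpret bt_nonsingular_design m \<pi> w
      using assms design_iff by unfold_locales simp_all
    show "locally_D_optimal m \<pi> w"
      using conds design det_info_mat_red_pos det_le_if_Gamma_le
      by (simp add: locally_D_optimal_def)
  qed
qed

end
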